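(* Let $\mathbf A$ be a finite totally ordered algebra. Then $\mathrm{nuP}_{\mathbf A}\subseteq\mathrm{MULTIMONOTONE}$.
   Context: A finite algebra has a finite universe and finitely many basic operations; it is totally ordered if some total order on its universe is preserved by all its basic operations. An $n$-ary circuit over $\mathbf A$ is a DAG with one output node, sources labelled by variables $x_1,\dots,x_n$ or constants from $A$, gates labelled by basic operations of $\mathbf A$; its size is nodes plus edges. A NuDFA over $\mathbf A$ is $(\{t_n\}_{n\ge1},\iota,S)$ with $t_n$ an $n$-ary circuit, $\iota:\{0,1\}\to A$, $S\subseteq A$; it accepts $b\in\{0,1\}^n$ iff $t_n(\iota(b_1),\dots,\iota(b_n))\in S$; polynomial size means size of $t_n$ polynomial in $n$. $\mathrm{nuP}_{\mathbf A}$ is the class of languages over $\{0,1\}$ accepted by polynomial-size NuDFAs over $\mathbf A$. $\mathrm{MULTIMONOTONE}$ is the class of languages $L$ for which there is a constant $c$ such that for each $n$, $L\cap\{0,1\}^n=\{x:g(M_1(x),\dots,M_c(x))=1\}$ for some function $g:\{0,1\}^c\to\{0,1\}$ and circuits $M_1,\dots,M_c$ using only fan-in-2 $\wedge,\vee$ gates (on input variables and constants) of total size polynomial in $n$. *)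

theory Defs
  imports Main
begin

record 'a algebra =
  univ :: "'a set"
  ops  :: "(nat \<times> ('a list \<Rightarrow> 'a)) list"

definition finite_algebra :: "'a algebra \<Rightarrow> bool" where
  "finite_algebra A \<longleftrightarrow> finite (univ A) \<and> univ A \<noteq> {} \<and>
     (\<forall>(m, f) \<in> set (ops A). \<forall>xs. set xs \<subseteq> univ A \<and> length xs = m \<longrightarrow> f xs \<in> univ A)"

definition totally_ordered :: "'a algebra \<Rightarrow> bool" where
  "totally_ordered A \<longleftrightarrow> (\<exists>r. linear_order_on (univ A) r \<and>
     (\<forall>(m, f) \<in> set (ops A). \<forall>xs ys.
        set xs \<subseteq> univ A \<and> set ys \<subseteq> univ A \<and> length xs = m \<and> length ys = m \<and>
        list_all2 (\<lambda>a b. (a, b) \<in> r) xs ys \<longrightarrow> (f xs, f ys) \<in> r))"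

text \<open>A circuit (DAG) is represented in topologically sorted form as a list of
nodes; a node is an input variable x_(i+1) (Inp i), a constant, or a gate
labelled by the index of a basic operation together with the positions of its
predecessor nodes (which must occur earlier).\<close>
datatype 'a node = Inp nat | Cst 'a | Gate nat "nat list"

fun node_val :: "'a algebra \<Rightarrow> 'a list \<Rightarrow> 'a list \<Rightarrow> 'a node \<Rightarrow> 'a" where
  "node_val A x vs (Inp i) = x ! i"
| "node_val A x vs (Cst a) = a"
| "node_val A x vs (Gate k args) = snd (ops A ! k) (map (\<lambda>j. vs ! j) args)"

definition circ_vals :: "'a algebra \<Rightarrow> 'a list \<Rightarrow> 'a node list \<Rightarrow> 'a list" where
  "circ_vals A x gs = foldl (\<lambda>vs g. vs @ [node_val A x vs g]) [] gs"

definition circ_eval :: "'a algebra \<Rightarrow> 'a node list \<Rightarrow> 'a list \<Rightarrow> 'a" where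
  "circ_eval A gs x = last (circ_vals A x gs)"

definition wf_circuit :: "'a algebra \<Rightarrow> nat \<Rightarrow> 'a node list \<Rightarrow> bool" where
  "wf_circuit A n gs \<longleftrightarrow> gs \<noteq> [] \<and>
     (\<forall>p < length gs. case gs ! p of
        Inp i \<Rightarrow> i < n
      | Cst a \<Rightarrow> a \<in> univ A
      | Gate k args \<Rightarrow> k < length (ops A) \<and> length args = fst (ops A ! k) \<and> (\<forall>j \<in> set args. j < p))"

definition circ_size :: "'a node list \<Rightarrow> nat" where
  "circ_size gs = length gs + sum_list (map (\<lambda>g. case g of Gate _ args \<Rightarrow> length args | _ \<Rightarrow> 0) gs)"

definition nuP :: "'a algebra \<Rightarrow> bool list set set" where
  "nuP A = {L. \<exists>(t :: nat \<Rightarrow> 'a node list) (\<iota> :: bool \<Rightarrow> 'a) S.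
      (\<forall>n\<ge>1. wf_circuit A n (t n)) \<and> range \<iota> \<subseteq> univ A \<and> S \<subseteq> univ A \<and>
      (\<exists>c::nat. \<forall>n\<ge>1. circ_size (t n) \<le> c * n ^ c + c) \<and>
      (\<forall>b. length b \<ge> 1 \<longrightarrow> (b \<in> L \<longleftrightarrow> circ_eval A (t (length b)) (map \<iota> b) \<in> S))}"

text \<open>Monotone circuits: circuits over the two-element algebra with fan-in-2
AND (op 0) and OR (op 1); constants 0/1 are allowed as sources.\<close>
definition bool_alg :: "bool algebra" where
  "bool_alg = \<lparr>univ = UNIV, ops = [(2, \<lambda>xs. xs ! 0 \<and> xs ! 1), (2, \<lambda>xs. xs ! 0 \<or> xs ! 1)]\<rparr>"

definition MULTIMONOTONE :: "bool list set set" where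
  "MULTIMONOTONE = {L. \<exists>(c::nat) (d::nat). \<forall>n.
      \<exists>(g :: bool list \<Rightarrow> bool) (M :: nat \<Rightarrow> bool node list).
        (\<forall>i<c. wf_circuit bool_alg n (M i)) \<and>
        (\<Sum>i<c. circ_size (M i)) \<le> d * n ^ d + d \<and>
        (\<forall>x. length x = n \<longrightarrow> (x \<in> L \<longleftrightarrow> g (map (\<lambda>i. circ_eval bool_alg (M i) x) [0..<c])))}"

end

theory Submission
  imports Defs
begin

(*
  Orient a total order \<le> on A that is preserved by the basic operations so that
  \<iota> False \<le> \<iota> True.  For a node p of a circuit and a \<in> A, the bit [a \<le> value of p] is then
  a monotone function of the input bits: at an input it is a constant or the input bit, and
  at a gate f with argument values v, a \<le> f v holds iff a \<le> f bs for some tuple bs \<le> v,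
  which is an OR, over the finitely many such tuples bs, of ANDs of threshold bits of the
  argument nodes.  Hence a single monotone circuit of size linear in that of the given circuit
  computes all threshold bits.  By antisymmetry the output value is determined by its |A|
  threshold bits, so membership in S is a Boolean function of |A| monotone circuits.
*)

lemma length_circ_vals [simp]: "length (circ_vals A x gs) = length gs"
  by (induction gs rule: rev_induct) (simp_all add: circ_vals_def)

lemma circ_vals_snoc [simp]:
  "circ_vals A x (gs @ [g]) = circ_vals A x gs @ [node_val A x (circ_vals A x gs) g]"
  by (simp add: circ_vals_def)

lemma circ_vals_append_nth:
  "i < length gs \<Longrightarrow> circ_vals A x (gs @ hs) ! i = circ_vals A x gs ! i"
  by (induction hs rule: rev_induct) (simp_all flip: append_assoc add: nth_append)

lemma circ_vals_nth:
  "p < length gs \<Longrightarrow> circ_vals A x gs ! p = node_val A x (take p (circ_vals A x gs)) (gs ! p)"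
proof (induction gs rule: rev_induct)
  case (snoc g gs)
  then show ?case
    by (cases "p < length gs") (simp_all add: nth_append less_Suc_eq)
qed simp

lemma circ_eval_conv_nth: "gs \<noteq> [] \<Longrightarrow> circ_eval A gs x = circ_vals A x gs ! (length gs - 1)"
  by (metis circ_eval_def last_conv_nth length_circ_vals length_0_conv)

lemma circ_size_append [simp]: "circ_size (gs @ hs) = circ_size gs + circ_size hs"
  by (simp add: circ_size_def)

definition node_ok :: "'a algebra \<Rightarrow> nat \<Rightarrow> nat \<Rightarrow> 'a node \<Rightarrow> bool" where
  "node_ok A n p g \<longleftrightarrow> (case g of
      Inp i \<Rightarrow> i < n
    | Cst a \<Rightarrow> a \<in> univ A
    | Gate k args \<Rightarrow> k < length (ops A) \<and> length args = fst (ops A ! k) \<and> (\<forall>j \<in> set args. j < p))"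

lemma wf_circuit_iff_node_ok:
  "wf_circuit A n gs \<longleftrightarrow> gs \<noteq> [] \<and> (\<forall>p < length gs. node_ok A n p (gs ! p))"
  by (simp add: wf_circuit_def node_ok_def)

lemma wf_circuit_snoc:
  "wf_circuit A n gs \<Longrightarrow> node_ok A n (length gs) g \<Longrightarrow> wf_circuit A n (gs @ [g])"
  by (auto simp: wf_circuit_iff_node_ok nth_append less_Suc_eq)

lemma circ_vals_nth_wf:
  assumes "wf_circuit A n gs" and "p < length gs"
  shows "circ_vals A x gs ! p = node_val A x (circ_vals A x gs) (gs ! p)"
proof (cases "gs ! p")
  case (Gate k args)
  then have "\<forall>j \<in> set args. j < p"
    using assms by (auto simp: wf_circuit_iff_node_ok node_ok_def)
  then show ?thesis
    using circ_vals_nth[OF assms(2)] Gate by (simp cong: map_cong)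
qed (use circ_vals_nth[OF assms(2)] in simp_all)

definition ops_closed :: "'a algebra \<Rightarrow> bool" where
  "ops_closed A \<longleftrightarrow>
     (\<forall>(m, f) \<in> set (ops A). \<forall>xs. set xs \<subseteq> univ A \<and> length xs = m \<longrightarrow> f xs \<in> univ A)"

lemma finite_algebra_iff: "finite_algebra A \<longleftrightarrow> finite (univ A) \<and> univ A \<noteq> {} \<and> ops_closed A"
  by (simp add: finite_algebra_def ops_closed_def)

lemma circ_vals_in_univ:
  assumes "ops_closed A" and "wf_circuit A n gs" and "set x \<subseteq> univ A" and "length x = n"
  shows "p < length gs \<Longrightarrow> circ_vals A x gs ! p \<in> univ A"
proof (induction p rule: less_induct)
  case (less p)
  have ok: "node_ok A n p (gs ! p)"
    using assms(2) less.prems by (simp add: wf_circuit_iff_node_ok)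
  show ?case
  proof (cases "gs ! p")
    case (Gate k args)
    obtain m f where op: "ops A ! k = (m, f)" by fastforce
    with ok Gate have "(m, f) \<in> set (ops A)" "length args = m" "\<forall>j \<in> set args. j < p"
      by (auto simp: node_ok_def) (metis nth_mem)
    moreover have "set (map (\<lambda>j. circ_vals A x gs ! j) args) \<subseteq> univ A"
      using less.IH less.prems calculation(3) by auto
    ultimately have "f (map (\<lambda>j. circ_vals A x gs ! j) args) \<in> univ A"
      using assms(1) unfolding ops_closed_def by fastforce
    then show ?thesis
      using circ_vals_nth_wf[OF assms(2) less.prems] Gate op by simp
  qed (use ok assms(3,4) circ_vals_nth_wf[OF assms(2) less.prems] in \<open>auto simp: node_ok_def\<close>)
qed

lemma circ_eval_in_univ:
  assumes "ops_closed A" and "wf_circuit A n gs" and "set x \<subseteq> univ A" and "length x = n"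
  shows "circ_eval A gs x \<in> univ A"
proof -
  have "gs \<noteq> []" using assms(2) by (simp add: wf_circuit_def)
  then show ?thesis
    using circ_vals_in_univ[OF assms, of "length gs - 1"] by (simp add: circ_eval_conv_nth)
qed

lemma length_le_circ_size: "length gs \<le> circ_size gs"
  by (simp add: circ_size_def)

section \<open>Formulas with references to earlier nodes\<close>

datatype 'a fml = FVar nat | FRef nat | FCst 'a | FOp nat "'a fml" "'a fml"

fun fml_val :: "'a algebra \<Rightarrow> (nat \<Rightarrow> 'a) \<Rightarrow> 'a list \<Rightarrow> 'a fml \<Rightarrow> 'a" where
  "fml_val A E x (FVar i) = x ! i"
| "fml_val A E x (FRef j) = E j"
| "fml_val A E x (FCst a) = a"
| "fml_val A E x (FOp k e1 e2) = snd (ops A ! k) [fml_val A E x e1, fml_val A E x e2]"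

fun fml_ok :: "'a algebra \<Rightarrow> nat \<Rightarrow> nat \<Rightarrow> 'a fml \<Rightarrow> bool" where
  "fml_ok A N n (FVar i) \<longleftrightarrow> i < n"
| "fml_ok A N n (FRef j) \<longleftrightarrow> j < N"
| "fml_ok A N n (FCst a) \<longleftrightarrow> a \<in> univ A"
| "fml_ok A N n (FOp k e1 e2) \<longleftrightarrow>
     k < length (ops A) \<and> fst (ops A ! k) = 2 \<and> fml_ok A N n e1 \<and> fml_ok A N n e2"

fun fml_size :: "'a fml \<Rightarrow> nat" where
  "fml_size (FOp k e1 e2) = fml_size e1 + fml_size e2 + 1"
| "fml_size _ = 1"

(* fml_circuit b e: the nodes that compute e when appended to a circuit with b nodes, in which
   FRef j denotes node j, together with the position of the node holding the value of e. *)
fun fml_circuit :: "nat \<Rightarrow> 'a fml \<Rightarrow> 'a node list \<times> nat" where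
  "fml_circuit b (FVar i) = ([Inp i], b)"
| "fml_circuit b (FRef j) = ([], j)"
| "fml_circuit b (FCst a) = ([Cst a], b)"
| "fml_circuit b (FOp k e1 e2) =
     (let (gs1, o1) = fml_circuit b e1; (gs2, o2) = fml_circuit (b + length gs1) e2
      in (gs1 @ gs2 @ [Gate k [o1, o2]], b + length gs1 + length gs2))"

lemma fml_ok_mono: "fml_ok A N n e \<Longrightarrow> N \<le> N' \<Longrightarrow> fml_ok A N' n e"
  by (induction e) auto

lemma fml_val_cong:
  "fml_ok A N n e \<Longrightarrow> (\<And>j. j < N \<Longrightarrow> E j = E' j) \<Longrightarrow> fml_val A E x e = fml_val A E' x e"
  by (induction e) auto

lemma circ_size_fml_circuit: "circ_size (fst (fml_circuit b e)) \<le> 3 * fml_size e"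
proof (induction e arbitrary: b)
  case (FOp k e1 e2)
  obtain gs1 o1 where "fml_circuit b e1 = (gs1, o1)" by fastforce
  moreover obtain gs2 o2 where "fml_circuit (b + length gs1) e2 = (gs2, o2)" by fastforce
  ultimately show ?case
    using FOp.IH(1)[of b] FOp.IH(2)[of "b + length gs1"] by (simp add: circ_size_def)
qed (simp_all add: circ_size_def)

lemma fml_circuit_correct:
  assumes "fml_ok A (length gs) n e" and "fml_circuit (length gs) e = (hs, p)"
  shows "p < length (gs @ hs) \<and>
    circ_vals A x (gs @ hs) ! p = fml_val A (\<lambda>j. circ_vals A x gs ! j) x e \<and>
    (wf_circuit A n gs \<longrightarrow> wf_circuit A n (gs @ hs))"
  using assms
proof (induction e arbitrary: gs hs p)
  case (FOp k e1 e2)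
  obtain hs1 o1 where c1: "fml_circuit (length gs) e1 = (hs1, o1)" by fastforce
  obtain hs2 o2 where c2: "fml_circuit (length (gs @ hs1)) e2 = (hs2, o2)" by fastforce
  have hs: "hs = hs1 @ hs2 @ [Gate k [o1, o2]]" and p: "p = length (gs @ hs1 @ hs2)"
    using FOp.prems c1 c2 by auto
  have ok: "k < length (ops A)" "fst (ops A ! k) = 2" "fml_ok A (length gs) n e2"
    and ok1: "fml_ok A (length gs) n e1" and ok2: "fml_ok A (length (gs @ hs1)) n e2"
    using FOp.prems(1) fml_ok_mono[of A "length gs" n e2] by auto
  note IH1 = FOp.IH(1)[OF ok1 c1] and IH2 = FOp.IH(2)[OF ok2 c2]
  have "circ_vals A x (gs @ hs1 @ hs2) ! o1 = fml_val A (\<lambda>j. circ_vals A x gs ! j) x e1"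
    using IH1 circ_vals_append_nth[of o1 "gs @ hs1"] by simp
  moreover have "fml_val A (\<lambda>j. circ_vals A x (gs @ hs1) ! j) x e2
      = fml_val A (\<lambda>j. circ_vals A x gs ! j) x e2"
    by (rule fml_val_cong[OF ok(3)]) (simp add: circ_vals_append_nth)
  then have "circ_vals A x (gs @ hs1 @ hs2) ! o2 = fml_val A (\<lambda>j. circ_vals A x gs ! j) x e2"
    using IH2 by simp
  moreover have "wf_circuit A n gs \<longrightarrow> wf_circuit A n (gs @ hs1 @ hs2)"
    using IH1 IH2 by simp
  moreover have "node_ok A n (length (gs @ hs1 @ hs2)) (Gate k [o1, o2])"
    using ok IH1 IH2 by (auto simp: node_ok_def)
  ultimately show ?case
    by (simp add: hs p wf_circuit_snoc nth_append flip: append_assoc)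
qed (auto simp: node_ok_def wf_circuit_snoc nth_append)

definition fml_all :: "bool fml list \<Rightarrow> bool fml" where
  "fml_all es = foldr (FOp 0) es (FCst True)"

definition fml_ex :: "bool fml list \<Rightarrow> bool fml" where
  "fml_ex es = foldr (FOp 1) es (FCst False)"

lemma ops_bool_alg: "ops bool_alg = [(2, \<lambda>xs. xs ! 0 \<and> xs ! 1), (2, \<lambda>xs. xs ! 0 \<or> xs ! 1)]"
  by (simp add: bool_alg_def)

lemma fml_val_fml_all [simp]:
  "fml_val bool_alg E x (fml_all es) \<longleftrightarrow> (\<forall>e \<in> set es. fml_val bool_alg E x e)"
  by (induction es) (simp_all add: fml_all_def ops_bool_alg)

lemma fml_val_fml_ex [simp]:
  "fml_val bool_alg E x (fml_ex es) \<longleftrightarrow> (\<exists>e \<in> set es. fml_val bool_alg E x e)"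
  by (induction es) (simp_all add: fml_ex_def ops_bool_alg)

lemma fml_ok_fml_all [simp]:
  "fml_ok bool_alg N n (fml_all es) \<longleftrightarrow> (\<forall>e \<in> set es. fml_ok bool_alg N n e)"
  by (induction es) (simp_all add: fml_all_def ops_bool_alg bool_alg_def)

lemma fml_ok_fml_ex [simp]:
  "fml_ok bool_alg N n (fml_ex es) \<longleftrightarrow> (\<forall>e \<in> set es. fml_ok bool_alg N n e)"
  by (induction es) (simp_all add: fml_ex_def ops_bool_alg bool_alg_def)

lemma fml_size_fml_all: "fml_size (fml_all es) = (\<Sum>e \<leftarrow> es. fml_size e + 1) + 1"
  by (induction es) (simp_all add: fml_all_def)

lemma fml_size_fml_ex: "fml_size (fml_ex es) = (\<Sum>e \<leftarrow> es. fml_size e + 1) + 1"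
  by (induction es) (simp_all add: fml_ex_def)

section \<open>Deciding slices of a language by monotone circuits\<close>

definition monotone_decidable :: "nat \<Rightarrow> nat \<Rightarrow> nat \<Rightarrow> bool list set \<Rightarrow> bool" where
  "monotone_decidable c s n L \<longleftrightarrow> (\<exists>g M. (\<forall>i<c. wf_circuit bool_alg n (M i)) \<and>
     (\<Sum>i<c. circ_size (M i)) \<le> s \<and>
     (\<forall>x. length x = n \<longrightarrow> (x \<in> L \<longleftrightarrow> g (map (\<lambda>i. circ_eval bool_alg (M i) x) [0..<c]))))"

lemma MULTIMONOTONE_iff:
  "L \<in> MULTIMONOTONE \<longleftrightarrow> (\<exists>c d. \<forall>n. monotone_decidable c (d * n ^ d + d) n L)"
  by (simp add: MULTIMONOTONE_def monotone_decidable_def)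

lemma monotone_decidable_mono:
  assumes "monotone_decidable c s n L" and "s \<le> s'"
  shows "monotone_decidable c s' n L"
  using assms(1) unfolding monotone_decidable_def
  by (elim exE conjE, intro exI conjI) (assumption | erule order_trans[OF _ assms(2)])+

lemma monotone_decidable_cong:
  "(\<And>x. length x = n \<Longrightarrow> x \<in> L \<longleftrightarrow> x \<in> L') \<Longrightarrow>
    monotone_decidable c s n L \<longleftrightarrow> monotone_decidable c s n L'"
  unfolding monotone_decidable_def by simp

lemma monotone_decidable_0: "monotone_decidable c c 0 L"
  unfolding monotone_decidable_def
  by (intro exI[of _ "\<lambda>_. [] \<in> L"] exI[of _ "\<lambda>_. [Cst False]"])
    (simp add: wf_circuit_def bool_alg_def circ_size_def)

lemma MULTIMONOTONEI:
  assumes "\<And>n. n \<ge> 1 \<Longrightarrow> monotone_decidable c (d * n ^ d + d) n L"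
  shows "L \<in> MULTIMONOTONE"
proof -
  have "monotone_decidable c ((d + c) * n ^ (d + c) + (d + c)) n L" for n
  proof (cases "n = 0")
    case True
    then have "monotone_decidable c c n L"
      using monotone_decidable_0 by simp
    then show ?thesis
      by (rule monotone_decidable_mono) simp
  next
    case False
    then have "monotone_decidable c (d * n ^ d + d) n L"
      using assms by simp
    moreover have "d * n ^ d + d \<le> (d + c) * n ^ (d + c) + (d + c)"
      using False by (intro add_mono mult_mono power_increasing) auto
    ultimately show ?thesis
      by (rule monotone_decidable_mono)
  qed
  then show ?thesis
    unfolding MULTIMONOTONE_iff by blast
qed

lemma affine_poly_bound:
  fixes a b c m n :: nat
  assumes "m \<le> c * n ^ c + c" and "n \<ge> 1"
  shows "a + b * m \<le> (a + b * c + c) * n ^ (a + b * c + c) + (a + b * c + c)"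
proof -
  have "n ^ c \<le> n ^ (a + b * c + c)"
    using assms(2) by (intro power_increasing) auto
  then have "b * c * n ^ c \<le> (a + b * c + c) * n ^ (a + b * c + c)"
    by (intro mult_mono) auto
  moreover have "b * m \<le> b * (c * n ^ c + c)"
    using assms(1) by simp
  ultimately show ?thesis
    by (simp add: algebra_simps)
qed

section \<open>Monotone circuits for threshold bits\<close>

definition ops_monotone :: "'a algebra \<Rightarrow> ('a \<times> 'a) set \<Rightarrow> bool" where
  "ops_monotone A r \<longleftrightarrow> (\<forall>(m, f) \<in> set (ops A). \<forall>xs ys.
     set xs \<subseteq> univ A \<and> set ys \<subseteq> univ A \<and> length xs = m \<and> length ys = m \<and>
     list_all2 (\<lambda>a b. (a, b) \<in> r) xs ys \<longrightarrow> (f xs, f ys) \<in> r)"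

lemma monotone_le_op_iff:
  assumes "ops_monotone A r" and "preorder_on (univ A) r" and "(m, f) \<in> set (ops A)"
    and "set as = univ A" and "set v \<subseteq> univ A" and "length v = m"
  shows "(a, f v) \<in> r \<longleftrightarrow>
    (\<exists>bs \<in> set (List.n_lists m as). (a, f bs) \<in> r \<and> list_all2 (\<lambda>b c. (b, c) \<in> r) bs v)"
proof
  assume "(a, f v) \<in> r"
  moreover have "list_all2 (\<lambda>b c. (b, c) \<in> r) v v"
    using assms(2,5) by (auto simp: preorder_on_def intro!: list.rel_refl_strong refl_onD)
  ultimately show "\<exists>bs \<in> set (List.n_lists m as). (a, f bs) \<in> r \<and> list_all2 (\<lambda>b c. (b, c) \<in> r) bs v"
    using assms(4-6) by (auto simp: set_n_lists)
next
  assume "\<exists>bs \<in> set (List.n_lists m as). (a, f bs) \<in> r \<and> list_all2 (\<lambda>b c. (b, c) \<in> r) bs v"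
  then obtain bs where bs: "set bs \<subseteq> univ A" "length bs = m" "(a, f bs) \<in> r"
      "list_all2 (\<lambda>b c. (b, c) \<in> r) bs v"
    using assms(4) by (auto simp: set_n_lists)
  then have "(f bs, f v) \<in> r"
    using assms(1,3,5,6) unfolding ops_monotone_def by fastforce
  with bs(3) show "(a, f v) \<in> r"
    using assms(2) by (auto simp: preorder_on_def dest: transD)
qed

lemma foldl_le_add_mult:
  fixes h :: "'a \<Rightarrow> nat"
  assumes "\<And>s y. y \<in> set ys \<Longrightarrow> h (f s y) \<le> h s + c"
  shows "h (foldl f s ys) \<le> h s + length ys * c"
  using assms
proof (induction ys arbitrary: s)
  case (Cons y ys)
  then have "h (foldl f (f s y) ys) \<le> h (f s y) + length ys * c" by simp
  also have "\<dots> \<le> h s + length (y # ys) * c" using Cons.prems[of y s] by simp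
  finally show ?case by simp
qed simp

(* A monotone circuit under construction, together with the position pos (p, a) of its node
   holding the threshold bit [a \<le> value of node p] of the simulated circuit. *)
type_synonym 'a threshold_state = "bool node list \<times> (nat \<times> 'a \<Rightarrow> nat)"

locale threshold_encoding =
  fixes A :: "'a algebra" and r :: "('a \<times> 'a) set" and \<iota> :: "bool \<Rightarrow> 'a" and as :: "'a list"
  assumes ops_closed: "ops_closed A"
    and preorder: "preorder_on (univ A) r"
    and ops_monotone: "ops_monotone A r"
    and \<iota>_mono: "(\<iota> False, \<iota> True) \<in> r"
    and range_\<iota>: "range \<iota> \<subseteq> univ A"
    and set_as: "set as = univ A"
begin

lemma r_refl: "a \<in> univ A \<Longrightarrow> (a, a) \<in> r"
  using preorder by (auto simp: preorder_on_def refl_onD)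

lemma r_trans: "(a, b) \<in> r \<Longrightarrow> (b, c) \<in> r \<Longrightarrow> (a, c) \<in> r"
  using preorder by (auto simp: preorder_on_def dest: transD)

(* The bit [a \<le> value of node g], as a formula over the bits of earlier nodes, which sit
   at positions pos.  At a gate f it uses that a \<le> f v iff a \<le> f bs for some bs \<le> v. *)
fun threshold_fml :: "(nat \<times> 'a \<Rightarrow> nat) \<Rightarrow> 'a node \<Rightarrow> 'a \<Rightarrow> bool fml" where
  "threshold_fml pos (Inp i) a =
     (if (a, \<iota> False) \<in> r then FCst True else if (a, \<iota> True) \<in> r then FVar i else FCst False)"
| "threshold_fml pos (Cst b) a = FCst ((a, b) \<in> r)"
| "threshold_fml pos (Gate k args) a =
     fml_ex (map (\<lambda>bs. fml_all (map (\<lambda>i. FRef (pos (args ! i, bs ! i))) [0..<length args]))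
       (filter (\<lambda>bs. (a, snd (ops A ! k) bs) \<in> r) (List.n_lists (fst (ops A ! k)) as)))"

fun add_threshold :: "nat \<Rightarrow> 'a node \<Rightarrow> 'a threshold_state \<Rightarrow> 'a \<Rightarrow> 'a threshold_state" where
  "add_threshold p g (gs, pos) a =
     (case fml_circuit (length gs) (threshold_fml pos g a) of
        (hs, q) \<Rightarrow> (gs @ hs, pos((p, a) := q)))"

definition threshold_layer :: "nat \<Rightarrow> 'a node \<Rightarrow> 'a threshold_state \<Rightarrow> 'a threshold_state" where
  "threshold_layer p g st = foldl (add_threshold p g) st as"

(* The node Cst False is only there because circuits must be nonempty. *)
definition threshold_circuit :: "'a node list \<Rightarrow> 'a threshold_state" where
  "threshold_circuit t =
     foldl (\<lambda>st p. threshold_layer p (t ! p) st) ([Cst False], \<lambda>_. 0) [0..<length t]"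

definition computes_thresholds ::
    "nat \<Rightarrow> 'a node list \<Rightarrow> (nat \<times> 'a) set \<Rightarrow> 'a threshold_state \<Rightarrow> bool" where
  "computes_thresholds n t D st \<longleftrightarrow> wf_circuit bool_alg n (fst st) \<and>
     (\<forall>(p, a) \<in> D. snd st (p, a) < length (fst st) \<and>
        (\<forall>x. length x = n \<longrightarrow>
           circ_vals bool_alg x (fst st) ! snd st (p, a) \<longleftrightarrow> (a, circ_vals A (map \<iota> x) t ! p) \<in> r))"

lemma computes_thresholdsD:
  assumes "computes_thresholds n t D st" and "(p, a) \<in> D"
  shows "snd st (p, a) < length (fst st)"
    and "length x = n \<Longrightarrow>
      circ_vals bool_alg x (fst st) ! snd st (p, a) \<longleftrightarrow> (a, circ_vals A (map \<iota> x) t ! p) \<in> r"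
  using assms by (auto simp: computes_thresholds_def)

definition threshold_fml_size_bound :: nat where
  "threshold_fml_size_bound = (\<Sum>(m, f) \<leftarrow> ops A. length as ^ m * (2 * m + 2)) + 1"

definition layer_size_bound :: nat where
  "layer_size_bound = length as * (3 * threshold_fml_size_bound)"

lemma fml_size_threshold_fml:
  assumes "node_ok A n p g"
  shows "fml_size (threshold_fml pos g a) \<le> threshold_fml_size_bound"
proof (cases g)
  case (Gate k args)
  define m where "m = fst (ops A ! k)"
  define bss where "bss = filter (\<lambda>bs. (a, snd (ops A ! k) bs) \<in> r) (List.n_lists m as)"
  have k: "k < length (ops A)" using assms Gate by (simp add: node_ok_def)
  have "fml_size (threshold_fml pos g a)
      = (\<Sum>bs \<leftarrow> bss. fml_size (fml_all (map (\<lambda>i. FRef (pos (args ! i, bs ! i))) [0..<length args])) + 1) + 1"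
    by (simp add: Gate fml_size_fml_ex bss_def m_def comp_def)
  also have "\<dots> \<le> (\<Sum>bs \<leftarrow> bss. 2 * m + 2) + 1"
  proof -
    have "fml_size (fml_all (map (\<lambda>i. FRef (pos (args ! i, bs ! i))) [0..<length args])) + 1 = 2 * m + 2"
      for bs
      using assms Gate by (simp add: fml_size_fml_all sum_list_triv comp_def node_ok_def m_def)
    then show ?thesis by simp
  qed
  also have "\<dots> = length bss * (2 * m + 2) + 1"
    by (simp add: sum_list_triv)
  also have "\<dots> \<le> length as ^ m * (2 * m + 2) + 1"
  proof -
    have "length bss \<le> length as ^ m"
      unfolding bss_def by (metis length_filter_le length_n_lists)
    then show ?thesis by (intro add_le_mono1 mult_le_mono1)
  qed
  also have "\<dots> \<le> threshold_fml_size_bound"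
  proof -
    have "(\<lambda>(m, f). length as ^ m * (2 * m + 2)) (ops A ! k)
        \<in> set (map (\<lambda>(m, f). length as ^ m * (2 * m + 2)) (ops A))"
      using k by simp
    from member_le_sum_list[OF this] show ?thesis
      by (simp add: threshold_fml_size_bound_def m_def case_prod_beta)
  qed
  finally show ?thesis .
qed (auto simp: threshold_fml_size_bound_def)

lemma circ_size_add_threshold:
  "node_ok A n p g \<Longrightarrow>
    circ_size (fst (add_threshold p g st a)) \<le> circ_size (fst st) + 3 * threshold_fml_size_bound"
  using circ_size_fml_circuit[of "length (fst st)" "threshold_fml (snd st) g a"]
    fml_size_threshold_fml[of n p g "snd st" a]
  by (cases st) (auto split: prod.split)

context
  fixes n :: nat and t :: "'a node list"
  assumes wf_t: "wf_circuit A n t"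
begin

abbreviation val :: "bool list \<Rightarrow> 'a list" where
  "val x \<equiv> circ_vals A (map \<iota> x) t"

lemma node_ok_t: "p < length t \<Longrightarrow> node_ok A n p (t ! p)"
  using wf_t by (simp add: wf_circuit_iff_node_ok)

lemma threshold_fml_ok:
  assumes "p < length t" and "computes_thresholds n t D (gs, pos)" and "{..<p} \<times> set as \<subseteq> D"
  shows "fml_ok bool_alg (length gs) n (threshold_fml pos (t ! p) a)"
proof (cases "t ! p")
  case (Gate k args)
  have pos: "pos (j, b) < length gs" if "j \<in> set args" "b \<in> set as" for j b
  proof -
    have "(j, b) \<in> D"
      using assms(3) node_ok_t[OF assms(1)] Gate that by (auto simp: node_ok_def)
    from computes_thresholdsD(1)[OF assms(2) this] show ?thesis by simp
  qed
  have m: "length args = fst (ops A ! k)"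
    using node_ok_t[OF assms(1)] Gate by (simp add: node_ok_def)
  have "pos (args ! i, bs ! i) < length gs"
    if "i < length args" and "bs \<in> set (List.n_lists (fst (ops A ! k)) as)" for i bs
  proof (rule pos)
    have "length bs = length args" "set bs \<subseteq> set as" using that(2) m by (auto simp: set_n_lists)
    then show "args ! i \<in> set args" "bs ! i \<in> set as" using that(1) nth_mem[of i bs] by auto
  qed
  then show ?thesis
    using Gate by simp
qed (use node_ok_t[OF assms(1)] in \<open>auto simp: node_ok_def bool_alg_def\<close>)

lemma threshold_bits_args:
  assumes p: "p < length t" and gate: "t ! p = Gate k args" and m: "length args = m"
    and comp: "computes_thresholds n t D (gs, pos)" and D: "{..<p} \<times> set as \<subseteq> D"
    and x: "length x = n" and bs: "bs \<in> set (List.n_lists m as)"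
  shows "(\<forall>i \<in> {0..<m}. circ_vals bool_alg x gs ! pos (args ! i, bs ! i))
    \<longleftrightarrow> list_all2 (\<lambda>b c. (b, c) \<in> r) bs (map (\<lambda>j. val x ! j) args)"
proof -
  have args: "\<forall>j \<in> set args. j < p"
    using node_ok_t[OF p] gate by (simp add: node_ok_def)
  have bs': "length bs = m" "set bs \<subseteq> set as"
    using bs by (auto simp: set_n_lists)
  have "circ_vals bool_alg x gs ! pos (args ! i, bs ! i) \<longleftrightarrow> (bs ! i, val x ! (args ! i)) \<in> r"
    if "i < m" for i
  proof -
    have "args ! i \<in> set args" "bs ! i \<in> set as"
      using that bs' m nth_mem[of i bs] by auto
    with D args have "(args ! i, bs ! i) \<in> D" by auto
    from computes_thresholdsD(2)[OF comp this x] show ?thesis by simp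
  qed
  then show ?thesis
    using bs' m by (auto simp: list_all2_conv_all_nth)
qed

lemma threshold_fml_val:
  assumes p: "p < length t" and comp: "computes_thresholds n t D (gs, pos)"
    and D: "{..<p} \<times> set as \<subseteq> D" and x: "length x = n"
  shows "fml_val bool_alg (\<lambda>j. circ_vals bool_alg x gs ! j) x (threshold_fml pos (t ! p) a)
    \<longleftrightarrow> (a, val x ! p) \<in> r"
proof (cases "t ! p")
  case (Inp i)
  have "i < length x" using node_ok_t[OF p] Inp x by (simp add: node_ok_def)
  then have "val x ! p = \<iota> (x ! i)" using circ_vals_nth_wf[OF wf_t p] Inp by simp
  moreover have "(a, \<iota> b) \<in> r" if "(a, \<iota> False) \<in> r" for b
    using that \<iota>_mono r_trans by (cases b) auto
  ultimately show ?thesis using Inp by (cases "x ! i") auto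
next
  case (Cst b)
  then show ?thesis using circ_vals_nth_wf[OF wf_t p] by simp
next
  case (Gate k args)
  obtain m f where op: "ops A ! k = (m, f)" by fastforce
  have op_mem: "(m, f) \<in> set (ops A)" and m: "length args = m" and args: "\<forall>j \<in> set args. j < p"
    using node_ok_t[OF p] Gate op by (auto simp: node_ok_def) (metis nth_mem)
  define v where "v = map (\<lambda>j. val x ! j) args"
  have val_p: "val x ! p = f v"
    using circ_vals_nth_wf[OF wf_t p] Gate op by (simp add: v_def)
  have "set (map \<iota> x) \<subseteq> univ A" using range_\<iota> by auto
  then have v: "set v \<subseteq> univ A" "length v = m"
    using circ_vals_in_univ[OF ops_closed wf_t] x args p m by (auto simp: v_def)
  have "fml_val bool_alg (\<lambda>j. circ_vals bool_alg x gs ! j) x (threshold_fml pos (t ! p) a)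
      \<longleftrightarrow> (\<exists>bs \<in> set (List.n_lists m as). (a, f bs) \<in> r \<and>
            (\<forall>i \<in> {0..<m}. circ_vals bool_alg x gs ! pos (args ! i, bs ! i)))"
    unfolding Bex_def by (simp add: Gate op m)
  also have "\<dots> \<longleftrightarrow> (\<exists>bs \<in> set (List.n_lists m as). (a, f bs) \<in> r \<and> list_all2 (\<lambda>b c. (b, c) \<in> r) bs v)"
    by (rule bex_cong[OF refl], rule conj_cong[OF refl])
      (erule threshold_bits_args[OF p Gate m comp D x, folded v_def])
  also have "\<dots> \<longleftrightarrow> (a, val x ! p) \<in> r"
    using monotone_le_op_iff[OF ops_monotone preorder op_mem set_as v] val_p by simp
  finally show ?thesis .
qed

lemma add_threshold_computes:
  assumes p: "p < length t" and comp: "computes_thresholds n t D st"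
    and D: "{..<p} \<times> set as \<subseteq> D"
  shows "computes_thresholds n t (insert (p, a) D) (add_threshold p (t ! p) st a)"
proof -
  obtain gs pos where st: "st = (gs, pos)" by fastforce
  obtain hs q where c: "fml_circuit (length gs) (threshold_fml pos (t ! p) a) = (hs, q)"
    by fastforce
  have ok: "fml_ok bool_alg (length gs) n (threshold_fml pos (t ! p) a)"
    using threshold_fml_ok[OF p _ D] comp st by simp
  have wf: "wf_circuit bool_alg n gs"
    using comp st by (simp add: computes_thresholds_def)
  note new = fml_circuit_correct[OF ok c]
  have "circ_vals bool_alg x (gs @ hs) ! q \<longleftrightarrow> (a, val x ! p) \<in> r" if "length x = n" for x
    using new threshold_fml_val[OF p comp[unfolded st] D that] by auto
  moreover have
    "circ_vals bool_alg x (gs @ hs) ! pos (p', a') = circ_vals bool_alg x gs ! pos (p', a')"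
    if "(p', a') \<in> D" for x p' a'
    using computes_thresholdsD(1)[OF comp that] st by (simp add: circ_vals_append_nth)
  ultimately show ?thesis
    using comp new wf st c by (auto simp: computes_thresholds_def)
qed

lemma threshold_layer_computes:
  assumes p: "p < length t" and comp: "computes_thresholds n t ({..<p} \<times> set as) st"
  shows "computes_thresholds n t ({..<Suc p} \<times> set as) (threshold_layer p (t ! p) st)"
proof -
  have "computes_thresholds n t (D \<union> {p} \<times> set bs) (foldl (add_threshold p (t ! p)) st bs)"
    if "computes_thresholds n t D st" and "{..<p} \<times> set as \<subseteq> D" for bs D st
    using that
  proof (induction bs arbitrary: D st)
    case (Cons b bs)
    have "computes_thresholds n t (insert (p, b) D) (add_threshold p (t ! p) st b)"
      using add_threshold_computes[OF p Cons.prems] .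
    moreover have "{..<p} \<times> set as \<subseteq> insert (p, b) D"
      using Cons.prems(2) by auto
    ultimately have "computes_thresholds n t (insert (p, b) D \<union> {p} \<times> set bs)
        (foldl (add_threshold p (t ! p)) (add_threshold p (t ! p) st b) bs)"
      by (rule Cons.IH)
    moreover have "insert (p, b) D \<union> {p} \<times> set bs = D \<union> {p} \<times> set (b # bs)"
      by auto
    ultimately show ?case by simp
  qed simp
  from this[OF comp subset_refl, of as]
  have "computes_thresholds n t ({..<p} \<times> set as \<union> {p} \<times> set as) (threshold_layer p (t ! p) st)"
    by (simp add: threshold_layer_def)
  moreover have "{..<p} \<times> set as \<union> {p} \<times> set as = {..<Suc p} \<times> set as"
    by auto
  ultimately show ?thesis by simp
qed

lemma threshold_circuit_computes:
  "computes_thresholds n t ({..<length t} \<times> set as) (threshold_circuit t)"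
proof -
  have "computes_thresholds n t ({..<p} \<times> set as)
      (foldl (\<lambda>st p. threshold_layer p (t ! p) st) ([Cst False], \<lambda>_. 0) [0..<p])"
    if "p \<le> length t" for p
    using that
  proof (induction p)
    case 0
    then show ?case
      by (simp add: computes_thresholds_def wf_circuit_iff_node_ok node_ok_def bool_alg_def)
  next
    case (Suc p)
    then show ?case
      using threshold_layer_computes by simp
  qed
  then show ?thesis
    by (simp add: threshold_circuit_def)
qed

lemma circ_size_threshold_circuit:
  "circ_size (fst (threshold_circuit t)) \<le> 1 + length t * layer_size_bound"
proof -
  have "circ_size (fst (threshold_layer p (t ! p) st)) \<le> circ_size (fst st) + layer_size_bound"
    if "p < length t" for p st
    unfolding threshold_layer_def layer_size_bound_def
    by (rule foldl_le_add_mult) (use circ_size_add_threshold node_ok_t[OF that] in blast)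
  then have "circ_size (fst (foldl (\<lambda>st p. threshold_layer p (t ! p) st) st0 [0..<length t]))
      \<le> circ_size (fst st0) + length [0..<length t] * layer_size_bound"
    for st0
    by (intro foldl_le_add_mult[where h = "\<lambda>st. circ_size (fst st)"]) simp
  from this[of "([Cst False], \<lambda>_. 0)"] show ?thesis
    by (simp add: threshold_circuit_def circ_size_def)
qed

lemma threshold_output_circuits:
  obtains M where "\<And>i. i < length as \<Longrightarrow> wf_circuit bool_alg n (M i)"
    and "(\<Sum>i<length as. circ_size (M i)) \<le> 4 * length as + length as * layer_size_bound * length t"
    and "\<And>x i. length x = n \<Longrightarrow> i < length as \<Longrightarrow>
      circ_eval bool_alg (M i) x \<longleftrightarrow> (as ! i, circ_eval A t (map \<iota> x)) \<in> r"
proof -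
  obtain gs pos where c: "threshold_circuit t = (gs, pos)" by fastforce
  have comp: "computes_thresholds n t ({..<length t} \<times> set as) (gs, pos)"
    using threshold_circuit_computes c by simp
  have t_ne: "t \<noteq> []" using wf_t by (simp add: wf_circuit_def)
  define N where "N = length t - 1"
  have N: "N < length t" using t_ne by (simp add: N_def)
  have pos_less: "pos (N, as ! i) < length gs" if "i < length as" for i
    using computes_thresholdsD(1)[OF comp] N that by simp
  \<comment> \<open>The gate x \<or> x copies the threshold bit of the output node of t to the end.\<close>
  define M where "M i = gs @ [Gate 1 [pos (N, as ! i), pos (N, as ! i)]]" for i
  show ?thesis
  proof
    show "wf_circuit bool_alg n (M i)" if "i < length as" for i
      using comp pos_less[OF that]
      by (auto simp: M_def computes_thresholds_def node_ok_def ops_bool_alg intro!: wf_circuit_snoc)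
    have "circ_size (M i) \<le> 4 + length t * layer_size_bound" for i
      using circ_size_threshold_circuit c by (simp add: M_def circ_size_def)
    then have "(\<Sum>i<length as. circ_size (M i)) \<le> length as * (4 + length t * layer_size_bound)"
      using sum_bounded_above[of "{..<length as}" "\<lambda>i. circ_size (M i)"] by simp
    then show "(\<Sum>i<length as. circ_size (M i))
        \<le> 4 * length as + length as * layer_size_bound * length t"
      by (simp add: algebra_simps)
    show "circ_eval bool_alg (M i) x \<longleftrightarrow> (as ! i, circ_eval A t (map \<iota> x)) \<in> r"
      if x: "length x = n" and i: "i < length as" for x i
    proof -
      have "circ_eval bool_alg (M i) x = circ_vals bool_alg x gs ! pos (N, as ! i)"
        by (simp add: M_def circ_eval_def ops_bool_alg)
      also have "\<dots> \<longleftrightarrow> (as ! i, val x ! N) \<in> r"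
        using computes_thresholdsD(2)[OF comp _ x] N i by simp
      also have "val x ! N = circ_eval A t (map \<iota> x)"
        using circ_eval_conv_nth[OF t_ne] by (simp add: N_def)
      finally show ?thesis .
    qed
  qed
qed

end

lemma lower_bounds_inj:
  assumes "antisym r" and "v \<in> univ A" and "w \<in> univ A"
    and "map (\<lambda>a. (a, v) \<in> r) as = map (\<lambda>a. (a, w) \<in> r) as"
  shows "v = w"
proof -
  have iff: "(a, v) \<in> r \<longleftrightarrow> (a, w) \<in> r" if "a \<in> univ A" for a
    using assms(4) that set_as by (auto simp: map_eq_conv)
  have "(v, w) \<in> r" using iff[OF assms(2)] r_refl[OF assms(2)] by simp
  moreover have "(w, v) \<in> r" using iff[OF assms(3)] r_refl[OF assms(3)] by simp
  ultimately show "v = w" by (rule antisymD[OF assms(1)])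
qed

lemma threshold_decision:
  assumes wf_t: "wf_circuit A n t" and "antisym r" and "S \<subseteq> univ A"
  shows "monotone_decidable (length as) (4 * length as + length as * layer_size_bound * length t) n
    {x. circ_eval A t (map \<iota> x) \<in> S}"
proof -
  obtain M where wf: "\<And>i. i < length as \<Longrightarrow> wf_circuit bool_alg n (M i)"
    and size: "(\<Sum>i<length as. circ_size (M i))
      \<le> 4 * length as + length as * layer_size_bound * length t"
    and bits: "\<And>x i. length x = n \<Longrightarrow> i < length as \<Longrightarrow>
      circ_eval bool_alg (M i) x \<longleftrightarrow> (as ! i, circ_eval A t (map \<iota> x)) \<in> r"
    by (rule threshold_output_circuits[OF wf_t], rule that)
  define lower where "lower v = map (\<lambda>a. (a, v) \<in> r) as" for v
  have decide: "x \<in> {x. circ_eval A t (map \<iota> x) \<in> S} \<longleftrightarrow>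
      map (\<lambda>i. circ_eval bool_alg (M i) x) [0..<length as] \<in> lower ` S" if x: "length x = n" for x
  proof -
    define v where "v = circ_eval A t (map \<iota> x)"
    have "set (map \<iota> x) \<subseteq> univ A"
      using range_\<iota> by auto
    then have v: "v \<in> univ A"
      unfolding v_def using circ_eval_in_univ[OF ops_closed wf_t] x by simp
    have "map (\<lambda>i. circ_eval bool_alg (M i) x) [0..<length as]
        = map (\<lambda>i. (as ! i, v) \<in> r) [0..<length as]"
      using bits[OF x] by (intro map_cong) (simp_all add: v_def)
    also have "\<dots> = lower v"
      unfolding lower_def by (rule nth_equalityI) simp_all
    finally have bits_v: "map (\<lambda>i. circ_eval bool_alg (M i) x) [0..<length as] = lower v" .
    show ?thesis
      unfolding bits_v mem_Collect_eq v_def[symmetric]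
    proof
      assume "lower v \<in> lower ` S"
      then obtain w where "w \<in> S" and "lower v = lower w" by blast
      with lower_bounds_inj[OF \<open>antisym r\<close> v] \<open>S \<subseteq> univ A\<close> show "v \<in> S"
        by (auto simp: lower_def)
    qed (rule imageI)
  qed
  show ?thesis
    unfolding monotone_decidable_def
    by (intro exI[of _ "\<lambda>bs. bs \<in> lower ` S"] exI[of _ M] conjI allI impI)
      (use wf size decide in simp_all)
qed

end

lemma totally_ordered_iff: "totally_ordered A \<longleftrightarrow> (\<exists>r. linear_order_on (univ A) r \<and> ops_monotone A r)"
  by (simp add: totally_ordered_def ops_monotone_def)

lemma ops_monotone_converse:
  assumes "ops_monotone A r"
  shows "ops_monotone A (r\<inverse>)"
proof -
  have flip: "list_all2 (\<lambda>a b. (b, a) \<in> r) xs ys \<longleftrightarrow> list_all2 (\<lambda>a b. (a, b) \<in> r) ys xs" for xs ys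
    by (auto simp: list_all2_conv_all_nth)
  show ?thesis
    using assms unfolding ops_monotone_def converse_iff flip by blast
qed

lemma linear_order_orient:
  assumes "linear_order_on U r" and "x \<in> U" and "y \<in> U"
  obtains r' where "r' = r \<or> r' = r\<inverse>" and "(x, y) \<in> r'"
proof (cases "(x, y) \<in> r")
  case False
  have "refl_on U r" and total: "total_on U r"
    using assms(1) by (simp_all add: linear_order_on_def partial_order_on_def preorder_on_def)
  then have "x \<noteq> y" using False assms(2) by (auto dest: refl_onD)
  with total assms(2,3) False have "(x, y) \<in> r\<inverse>"
    by (auto simp: total_on_def)
  then show ?thesis using that by blast
qed (use that in blast)

lemma threshold_encoding_exists:
  assumes "finite_algebra A" and "totally_ordered A" and "range \<iota> \<subseteq> univ A"
  obtains r as where "threshold_encoding A r \<iota> as" and "antisym r"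
proof -
  obtain r0 where r0: "linear_order_on (univ A) r0" "ops_monotone A r0"
    using assms(2) by (auto simp: totally_ordered_iff)
  have "\<iota> False \<in> univ A" "\<iota> True \<in> univ A" using assms(3) by auto
  then obtain r where "r = r0 \<or> r = r0\<inverse>" and \<iota>_mono: "(\<iota> False, \<iota> True) \<in> r"
    using linear_order_orient[OF r0(1)] by blast
  with r0 have r: "linear_order_on (univ A) r" "ops_monotone A r"
    using ops_monotone_converse by auto
  obtain as where as: "set as = univ A"
    using assms(1) finite_list by (auto simp: finite_algebra_iff)
  have "threshold_encoding A r \<iota> as"
    using assms(1,3) r \<iota>_mono as by unfold_locales (auto simp: finite_algebra_iff order_on_defs)
  moreover have "antisym r"
    using r(1) by (simp add: order_on_defs)
  ultimately show ?thesis by (rule that)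
qed

theorem mainTheorem3:
  fixes A :: "'a algebra"
  assumes "finite_algebra A" and "totally_ordered A"
  shows "nuP A \<subseteq> MULTIMONOTONE"
proof
  fix L assume "L \<in> nuP A"
  then obtain t \<iota> S c where wf_t: "\<forall>n\<ge>1. wf_circuit A n (t n)" and \<iota>: "range \<iota> \<subseteq> univ A"
    and S: "S \<subseteq> univ A" and size_t: "\<forall>n\<ge>1. circ_size (t n) \<le> c * n ^ c + c"
    and L: "\<forall>b. length b \<ge> 1 \<longrightarrow> (b \<in> L \<longleftrightarrow> circ_eval A (t (length b)) (map \<iota> b) \<in> S)"
    unfolding nuP_def by blast
  obtain r as where enc: "threshold_encoding A r \<iota> as" and antisym: "antisym r"
    using threshold_encoding_exists[OF assms \<iota>] by blast
  interpret threshold_encoding A r \<iota> as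
    by (rule enc)
  define a b where "a = 4 * length as" and "b = length as * layer_size_bound"
  define d where "d = a + b * c + c"
  show "L \<in> MULTIMONOTONE"
  proof (rule MULTIMONOTONEI[where d = d])
    fix n :: nat assume n: "n \<ge> 1"
    let ?L = "{x. circ_eval A (t n) (map \<iota> x) \<in> S}"
    have "x \<in> L \<longleftrightarrow> x \<in> ?L" if "length x = n" for x
      using L that n by auto
    moreover have "monotone_decidable (length as) (a + b * length (t n)) n ?L"
      unfolding a_def b_def by (rule threshold_decision[OF wf_t[rule_format, OF n] antisym S])
    ultimately have "monotone_decidable (length as) (a + b * length (t n)) n L"
      using monotone_decidable_cong by blast
    moreover have "length (t n) \<le> c * n ^ c + c"
      using length_le_circ_size[of "t n"] size_t n by (meson order_trans)
    then have "a + b * length (t n) \<le> d * n ^ d + d"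
      unfolding d_def using n by (rule affine_poly_bound)
    ultimately show "monotone_decidable (length as) (d * n ^ d + d) n L"
      by (rule monotone_decidable_mono)
  qed
qed

end
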